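(* Let $\epsilon>0$ be fixed. Define the randomized mechanism $\mathcal{M}$ (BiSample-MD) whose input is a pair $(v,\epsilon_u)$ with $v\in[-1,1]$ and $\epsilon_u\in\mathbb{R}$, as follows. First set $v'=v$ if $\epsilon\le\epsilon_u$ and $v'=\bot$ (a null value) otherwise. Sample $s\in\{0,1\}$ uniformly at random. If $s=0$, generate a Bernoulli variable $b\in\{0,1\}$ with $$\Pr[b=1]=\begin{cases}\frac{1-e^{\epsilon}}{1+e^{\epsilon}}\cdot\frac{v'}{2}+\frac12 & \text{if } v'\in[-1,1],\\[2pt] \frac{1}{e^{\epsilon}+1} & \text{if } v'=\bot;\end{cases}$$ if $s=1$, generate a Bernoulli variable $b\in\{0,1\}$ with $$\Pr[b=1]=\begin{cases}\frac{e^{\epsilon}-1}{e^{\epsilon}+1}\cdot\frac{v'}{2}+\frac12 & \text{if } v'\in[-1,1],\\[2pt] \frac{1}{e^{\epsilon}+1} & \text{if } v'=\bot.\end{cases}$$ Output $\langle s,b\rangle$. Then $\mathcal{M}$ satisfies $\epsilon$-local differential privacy: for any two inputs $t_1,t_2$ and any output $o\in\{0,1\}\times\{0,1\}$, $\Pr[\mathcal{M}(t_1)=o]\le e^{\epsilon}\Pr[\mathcal{M}(t_2)=o]$.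
   Context: A randomized mechanism $\mathcal{M}$ satisfies $\epsilon$-local differential privacy ($\epsilon$-LDP) if for every two inputs $t_1,t_2$ in its domain and every output $t^*$ in its range, $\Pr[\mathcal{M}(t_1)=t^*]\le \exp(\epsilon)\Pr[\mathcal{M}(t_2)=t^*]$. Here $\epsilon_u$ models the user's privacy preference: the user reveals the real value only if the offered budget $\epsilon$ is at most $\epsilon_u$. *)

theory Defs
  imports "HOL-Probability.Probability"
begin

text \<open>Value after applying the user's privacy preference: Some v = real value, None = null.\<close>
definition masked_value :: "real \<Rightarrow> real \<Rightarrow> real \<Rightarrow> real option" where
  "masked_value eps v eps_u = (if eps \<le> eps_u then Some v else None)"

text \<open>Probability that b = 1 given the sampled bit s (False = 0, True = 1).\<close>
definition bisample_prob :: "real \<Rightarrow> bool \<Rightarrow> real option \<Rightarrow> real" where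
  "bisample_prob eps s v' = (case v' of
      None \<Rightarrow> 1 / (exp eps + 1)
    | Some x \<Rightarrow> (if s then (exp eps - 1) / (exp eps + 1) * (x / 2) + 1/2
                else (1 - exp eps) / (1 + exp eps) * (x / 2) + 1/2))"

definition bisample_md :: "real \<Rightarrow> real \<times> real \<Rightarrow> (bool \<times> bool) pmf" where
  "bisample_md eps t = (case t of (v, eps_u) \<Rightarrow>
     do { s \<leftarrow> pmf_of_set (UNIV :: bool set);
          b \<leftarrow> bernoulli_pmf (bisample_prob eps s (masked_value eps v eps_u));
          return_pmf (s, b) })"

end

(* The output (s, b) has probability 1/2 * Pr[b | s], so it suffices to compare the two
   Bernoulli laws used for the same s.  Every success probability of the mechanism, the one
   for the null value included, lies in [1/(e^eps+1), e^eps/(e^eps+1)]: for v in [-1,1] it is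
   1/2 +- (e^eps-1)/(e^eps+1) * v/2.  The interval is symmetric under p |-> 1 - p and its
   endpoints have ratio e^eps, so any two Bernoulli laws with parameters in it have
   likelihood ratio at most e^eps on both outcomes. *)
theory Submission
  imports Defs
begin

lemma pmf_bind_dependent_pair:
  "pmf (bind_pmf M (\<lambda>s'. bind_pmf (K s') (\<lambda>b'. return_pmf (s', b')))) (s, b)
     = pmf M s * pmf (K s) b"
proof -
  have "pmf (bind_pmf (K s') (\<lambda>b'. return_pmf (s', b'))) (s, b)
          = indicator {s} s' * pmf (K s) b" for s'
    by (cases "s' = s")
       (auto simp: map_pmf_def[symmetric] pmf_map_inj' inj_def pmf_eq_0_set_pmf)
  then show ?thesis
    by (simp add: pmf_bind measure_pmf_single)
qed

lemma pmf_bernoulli_le_mult: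
  fixes c p q :: real
  assumes "0 \<le> c"
    and "p \<in> {1 / (c + 1) .. c / (c + 1)}" and "q \<in> {1 / (c + 1) .. c / (c + 1)}"
  shows "pmf (bernoulli_pmf p) b \<le> c * pmf (bernoulli_pmf q) b"
proof -
  have c1: "0 < c + 1"
    using assms(1) by simp
  from assms(2,3) have p: "1 / (c + 1) \<le> p" "p \<le> c / (c + 1)"
    and q: "1 / (c + 1) \<le> q" "q \<le> c / (c + 1)"
    by auto
  have "0 \<le> 1 / (c + 1)" "c / (c + 1) \<le> 1"
    using c1 by simp_all
  then have p01: "0 \<le> p" "p \<le> 1" and q01: "0 \<le> q" "q \<le> 1"
    using p q by linarith+
  have "p \<le> c * (1 / (c + 1))"
    using p by simp
  also have "\<dots> \<le> c * q"
    using assms(1) q by (intro mult_left_mono)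
  finally have "p \<le> c * q" .
  have "1 - p \<le> c * (1 - c / (c + 1))"
    using p c1 by (simp add: field_simps)
  also have "\<dots> \<le> c * (1 - q)"
    using assms(1) q by (intro mult_left_mono) auto
  finally have "1 - p \<le> c * (1 - q)" .
  with \<open>p \<le> c * q\<close> show ?thesis
    using p01 q01 by (cases b) auto
qed

lemma bisample_prob_bounds:
  fixes eps v eps_u :: real
  assumes "0 \<le> eps" and "v \<in> {-1..1}"
  shows "bisample_prob eps s (masked_value eps v eps_u) \<in> {1 / (exp eps + 1) .. exp eps / (exp eps + 1)}"
proof -
  define c where "c = (exp eps - 1) / (exp eps + 1)"
  have "1 \<le> exp eps" "0 < exp eps + 1"
    using assms(1) by (simp, simp add: add_pos_pos)
  then have c_nonneg: "0 \<le> c" and lower: "1 / (exp eps + 1) = 1/2 - c/2"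
    and upper: "exp eps / (exp eps + 1) = 1/2 + c/2"
    by (simp_all add: c_def field_simps)
  have "\<bar>c * v\<bar> \<le> c"
    using assms(2) c_nonneg mult_left_mono[of "\<bar>v\<bar>" 1 c] by (auto simp: abs_mult)
  moreover have "bisample_prob eps s (Some v) = 1/2 + c * (if s then v else - v) / 2"
    by (simp add: bisample_prob_def c_def field_simps)
  ultimately have "bisample_prob eps s (Some v) \<in> {1/2 - c/2 .. 1/2 + c/2}"
    by (cases s) (auto simp: abs_le_iff)
  moreover have "bisample_prob eps s None \<in> {1/2 - c/2 .. 1/2 + c/2}"
    using c_nonneg lower by (simp add: bisample_prob_def)
  ultimately show ?thesis
    unfolding lower upper masked_value_def by simp
qed

theorem theorem4:
  fixes eps :: real and t1 t2 :: "real \<times> real" and out :: "bool \<times> bool"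
  assumes "eps > 0"
    and "fst t1 \<in> {-1..1}" and "fst t2 \<in> {-1..1}"
  shows "pmf (bisample_md eps t1) out \<le> exp eps * pmf (bisample_md eps t2) out"
proof -
  obtain s b where out: "out = (s, b)"
    by (cases out)
  have pmf_md: "pmf (bisample_md eps t) (s, b)
      = 1 / 2 * pmf (bernoulli_pmf (bisample_prob eps s (masked_value eps (fst t) (snd t)))) b" for t
    by (cases t) (simp add: bisample_md_def pmf_bind_dependent_pair)
  have "pmf (bernoulli_pmf (bisample_prob eps s (masked_value eps (fst t1) (snd t1)))) b
      \<le> exp eps * pmf (bernoulli_pmf (bisample_prob eps s (masked_value eps (fst t2) (snd t2)))) b"
    using assms by (intro pmf_bernoulli_le_mult bisample_prob_bounds) auto
  then show ?thesis
    unfolding out pmf_md by simp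
qed

end
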